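(* Let $\alpha>0$. Suppose sequences $\{\bm{P}^k\}_{k\ge0}\subseteq\mathcal{B}(n,K)$ and $\{\bm{Y}^k\}_{k\ge0}\subseteq\mathbb{R}^{n\times K}$ satisfy $\bm{P}^{k+1}\in\operatorname{sign}(\bm{P}^k+\bm{Y}^k/\alpha)$ for all $k\ge0$, $\bm{P}^k\to\bm{P}^*$ and $\bm{Y}^k\to\bm{Y}^*$. Then $\bm{P}^*\in\operatorname{sign}(\bm{P}^*+\bm{Y}^*/\alpha)$. Moreover, for any $\bm{Y}\in\mathbb{R}^{n\times K}$ with $\bm{P}^*\in\operatorname{sign}(\bm{Y})$, we have $\bm{P}^*\in\operatorname{sign}(\bm{P}^*+\bm{Y}/\alpha)$.
   Context: $\mathcal{B}(n,K)$ is the set of $n\times K$ matrices with entries in $\{\pm1\}$. For $a\in\mathbb{R}$, $\operatorname{sign}(a)=\{a/|a|\}$ if $a\ne0$ and $\operatorname{sign}(0)=\{-1,1\}$; for a matrix $\bm{B}$, $\operatorname{sign}(\bm{B})$ is the set of matrices $\bm{\xi}$ with $\xi_{ij}\in\operatorname{sign}(B_{ij})$ for all $i,j$. *)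

theory Defs
  imports "HOL-Analysis.Analysis"
begin

definition sign_set :: "real \<Rightarrow> real set" where
  "sign_set a = (if a = 0 then {-1, 1} else {a / \<bar>a\<bar>})"

definition sign_mat :: "real^'k^'n \<Rightarrow> (real^'k^'n) set" where
  "sign_mat B = {X. \<forall>i j. X $ i $ j \<in> sign_set (B $ i $ j)}"

definition binary_mats :: "(real^'k^'n) set" where
  "binary_mats = {X. \<forall>i j. X $ i $ j \<in> {-1, 1}}"

end

theory Submission
  imports Defs
begin

text \<open>
  For p \<in> {-1,1}, p \<in> sign(a) just says p a \<ge> 0, a closed condition on (p, a); passing to
  the limit entrywise in P^(k+1) \<in> sign(P^k + Y^k/\<alpha>) gives the first claim. For the second,
  the entries of P* square to 1, so P*_ij (P*_ij + Y_ij/\<alpha>) = 1 + P*_ij Y_ij/\<alpha> \<ge> 1.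
\<close>

lemma sign_set_iff_nonneg_mult:
  assumes "p \<in> {-1, 1}"
  shows "p \<in> sign_set a \<longleftrightarrow> 0 \<le> p * a"
  using assms by (cases a "0::real" rule: linorder_cases) (auto simp: sign_set_def)

lemma sign_set_limit:
  fixes p b :: "nat \<Rightarrow> real"
  assumes "\<And>k. p k \<in> {-1, 1}"
    and "\<And>k. p k \<in> sign_set (b k)"
    and "p \<longlonglongrightarrow> p'"
    and "b \<longlonglongrightarrow> b'"
  shows "p' \<in> {-1, 1} \<and> p' \<in> sign_set b'"
proof
  show p': "p' \<in> {-1, 1}"
    using closed_sequentially[of "{-1, 1}" p p'] assms(1,3) by simp
  have "0 \<le> p k * b k" for k
    using assms(1,2) sign_set_iff_nonneg_mult by blast
  then have "0 \<le> p' * b'"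
    by (intro LIMSEQ_le_const[OF tendsto_mult[OF assms(3,4)]]) auto
  then show "p' \<in> sign_set b'"
    using sign_set_iff_nonneg_mult[OF p'] by blast
qed

lemma sign_mat_limit:
  fixes X B :: "nat \<Rightarrow> real^'k^'n"
  assumes "\<And>k. X k \<in> binary_mats"
    and "\<And>k. X k \<in> sign_mat (B k)"
    and "X \<longlonglongrightarrow> X'"
    and "B \<longlonglongrightarrow> B'"
  shows "X' \<in> binary_mats \<and> X' \<in> sign_mat B'"
proof -
  have "X' $ i $ j \<in> {-1, 1} \<and> X' $ i $ j \<in> sign_set (B' $ i $ j)" for i j
    using assms(1,2)
    by (intro sign_set_limit[where p = "\<lambda>k. X k $ i $ j" and b = "\<lambda>k. B k $ i $ j"]
        tendsto_vec_nth assms(3,4)) (auto simp: binary_mats_def sign_mat_def)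
  then show ?thesis
    by (auto simp: binary_mats_def sign_mat_def)
qed

lemma sign_mat_add_scaled:
  fixes X Y :: "real^'k^'n"
  assumes "X \<in> binary_mats"
    and "X \<in> sign_mat Y"
    and "c \<ge> 0"
  shows "X \<in> sign_mat (X + c *\<^sub>R Y)"
proof -
  have "0 \<le> X $ i $ j * (X $ i $ j + c * Y $ i $ j)" for i j
  proof -
    have bin: "X $ i $ j \<in> {-1, 1}"
      using assms(1) by (auto simp: binary_mats_def)
    then have "0 \<le> X $ i $ j * Y $ i $ j"
      using assms(2) sign_set_iff_nonneg_mult by (auto simp: sign_mat_def)
    moreover have "X $ i $ j * (X $ i $ j + c * Y $ i $ j) = 1 + c * (X $ i $ j * Y $ i $ j)"
      using bin by (auto simp: algebra_simps)
    ultimately show ?thesis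
      using assms(3) by simp
  qed
  then show ?thesis
    using assms(1) sign_set_iff_nonneg_mult by (auto simp: binary_mats_def sign_mat_def)
qed

theorem lemma3:
  fixes \<alpha> :: real
    and P Y :: "nat \<Rightarrow> real^'k^'n"
    and Pstar Ystar :: "real^'k^'n"
  assumes "\<alpha> > 0"
    and "\<And>k. P k \<in> binary_mats"
    and "\<And>k. P (Suc k) \<in> sign_mat (P k + (1/\<alpha>) *\<^sub>R Y k)"
    and "P \<longlonglongrightarrow> Pstar"
    and "Y \<longlonglongrightarrow> Ystar"
  shows "Pstar \<in> sign_mat (Pstar + (1/\<alpha>) *\<^sub>R Ystar) \<and>
         (\<forall>Y'::real^'k^'n. Pstar \<in> sign_mat Y' \<longrightarrow> Pstar \<in> sign_mat (Pstar + (1/\<alpha>) *\<^sub>R Y'))"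
proof -
  have "(\<lambda>k. P k + (1/\<alpha>) *\<^sub>R Y k) \<longlonglongrightarrow> Pstar + (1/\<alpha>) *\<^sub>R Ystar"
    by (intro tendsto_intros assms(4,5))
  moreover have "(\<lambda>k. P (Suc k)) \<longlonglongrightarrow> Pstar"
    using LIMSEQ_Suc[OF assms(4)] .
  ultimately have "Pstar \<in> binary_mats \<and> Pstar \<in> sign_mat (Pstar + (1/\<alpha>) *\<^sub>R Ystar)"
    using sign_mat_limit[where X = "\<lambda>k. P (Suc k)" and B = "\<lambda>k. P k + (1/\<alpha>) *\<^sub>R Y k"]
      assms(2,3) by blast
  then show ?thesis
    using sign_mat_add_scaled[of Pstar _ "1/\<alpha>"] assms(1) by simp
qed

end
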